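(* Let $k$ be a difference field of characteristic $0$, $R=k\{y_1,\ldots,y_n\}$, $I$ a radical well-mixed monomial $\sigma$-ideal, and $\mathbf{a}\in(\mathbb{N}\cup\{-1\})^n$ with $\mathbf{a}\geqslant\mathbf{c}$ for every character vector $\mathbf{c}$ of $I$. If $\mathbf{b}\in(\mathbb{N}\cup\{-1\})^n$ with $\mathbf{b}\leqslant\mathbf{a}$, then $\mathbf{y}^{x^{\mathbf{b}}}\notin I$ if and only if $\mathbf{y}^{x^{\mathbf{a}-\mathbf{b}}}\in I^{[\mathbf{a}]}$.
   Context: A difference field is a field $k$ with a ring endomorphism $\sigma$; $R=k\{y_1,\ldots,y_n\}$ is the polynomial ring over $k$ in the variables $\sigma^j(y_i)$, with $\sigma$ extended naturally. For $p=\sum_ic_ix^i\in\mathbb{N}[x]$ and $a\in R$, $a^p=\prod_i(\sigma^i(a))^{c_i}$; $\mathbf{y}^{\mathbf{u}}=y_1^{u_1}\cdots y_n^{u_n}$. For an integer vector $\mathbf{b}$ with entries $\ge-1$, $x^{\mathbf{b}}=(x^{b_1},\ldots,x^{b_n})$ with $x^{-1}=0$; $\mathbf{a}-\mathbf{b}$ is coordinatewise subtraction. A $\sigma$-ideal is an ideal stable under $\sigma$; monomial if generated by monomials; well-mixed if $ab\in I\Rightarrow a\sigma(b)\in I$. $\langle F\rangle_r$ is the smallest radical well-mixed $\sigma$-ideal containing $F$. For $\mathbf{b}\in(\mathbb{N}\cup\{-1\})^n$, $\mathfrak{m}^{\mathbf{b}}$ is the $\sigma$-ideal generated by $\{y_i^{x^{b_i}}:b_i\ne-1\}$.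 Vectors are compared componentwise. The character vectors of $I$ are the finitely many vectors $\mathbf{a}_1,\ldots,\mathbf{a}_m\in(\mathbb{N}\cup\{-1\})^n$ forming a minimal set with $I=\langle\mathbf{y}^{x^{\mathbf{a}_1}},\ldots,\mathbf{y}^{x^{\mathbf{a}_m}}\rangle_r$ (equivalently, the componentwise-minimal $\mathbf{a}$ with $\mathbf{y}^{x^{\mathbf{a}}}\in I$). For $\mathbf{b}\leqslant\mathbf{a}$, $\mathbf{a}\backslash\mathbf{b}$ has $i$-th coordinate $a_i+1-b_i$ if $b_i\ge0$ and $-1$ if $b_i=-1$. The Alexander dual is $I^{[\mathbf{a}]}=\bigcap\{\mathfrak{m}^{\mathbf{a}\backslash\mathbf{c}}:\mathbf{c}\text{ a character vector of }I\}$. *)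

theory Defs
  imports Main "HOL-Library.Poly_Mapping"
begin

definition ring_endo :: "('k::field \<Rightarrow> 'k) \<Rightarrow> bool" where
  "ring_endo s \<longleftrightarrow> (\<forall>a b. s (a + b) = s a + s b) \<and> (\<forall>a b. s (a * b) = s a * s b) \<and> s 1 = 1"

text \<open>The difference polynomial ring k{y_i : i in 'n}: polynomial ring over k in the
  variables sigma^j(y_i), encoded as the pair (i, j).\<close>
type_synonym ('n, 'k) dpoly = "(('n \<times> nat) \<Rightarrow>\<^sub>0 nat) \<Rightarrow>\<^sub>0 'k"

definition dvar :: "'n \<Rightarrow> nat \<Rightarrow> ('n, 'k::field) dpoly" where
  "dvar i j = Poly_Mapping.single (Poly_Mapping.single (i, j) 1) 1"

definition shift_mon :: "(('n \<times> nat) \<Rightarrow>\<^sub>0 nat) \<Rightarrow> (('n \<times> nat) \<Rightarrow>\<^sub>0 nat)" where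
  "shift_mon m = (\<Sum>v\<in>Poly_Mapping.keys m. Poly_Mapping.single (fst v, Suc (snd v)) (Poly_Mapping.lookup m v))"

definition dsigma :: "('k::field \<Rightarrow> 'k) \<Rightarrow> ('n, 'k) dpoly \<Rightarrow> ('n, 'k) dpoly" where
  "dsigma s p = (\<Sum>m\<in>Poly_Mapping.keys p. Poly_Mapping.single (shift_mon m) (s (Poly_Mapping.lookup p m)))"

definition is_ideal :: "('n, 'k::field) dpoly set \<Rightarrow> bool" where
  "is_ideal I \<longleftrightarrow> 0 \<in> I \<and> (\<forall>p\<in>I. \<forall>q\<in>I. p + q \<in> I) \<and> (\<forall>r. \<forall>p\<in>I. r * p \<in> I)"

definition is_sigma_ideal :: "('k::field \<Rightarrow> 'k) \<Rightarrow> ('n, 'k) dpoly set \<Rightarrow> bool" where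
  "is_sigma_ideal s I \<longleftrightarrow> is_ideal I \<and> (\<forall>p\<in>I. dsigma s p \<in> I)"

definition is_radical :: "('n, 'k::field) dpoly set \<Rightarrow> bool" where
  "is_radical I \<longleftrightarrow> (\<forall>p (e::nat). p ^ e \<in> I \<longrightarrow> p \<in> I)"

definition well_mixed :: "('k::field \<Rightarrow> 'k) \<Rightarrow> ('n, 'k) dpoly set \<Rightarrow> bool" where
  "well_mixed s I \<longleftrightarrow> (\<forall>p q. p * q \<in> I \<longrightarrow> p * dsigma s q \<in> I)"

definition is_monomial :: "('n, 'k::field) dpoly \<Rightarrow> bool" where
  "is_monomial p \<longleftrightarrow> (\<exists>m. p = Poly_Mapping.single m 1)"

definition ideal_gen :: "('n, 'k::field) dpoly set \<Rightarrow> ('n, 'k) dpoly set" where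
  "ideal_gen S = \<Inter>{J. is_ideal J \<and> S \<subseteq> J}"

definition sigma_ideal_gen :: "('k::field \<Rightarrow> 'k) \<Rightarrow> ('n, 'k) dpoly set \<Rightarrow> ('n, 'k) dpoly set" where
  "sigma_ideal_gen s S = \<Inter>{J. is_sigma_ideal s J \<and> S \<subseteq> J}"

definition monomial_ideal :: "('n, 'k::field) dpoly set \<Rightarrow> bool" where
  "monomial_ideal I \<longleftrightarrow> (\<exists>M. (\<forall>p\<in>M. is_monomial p) \<and> I = ideal_gen M)"

text \<open>Vectors in (N \<union> {-1})^n, encoded as integer vectors with entries \<ge> -1.\<close>
definition valid_vec :: "('n \<Rightarrow> int) \<Rightarrow> bool" where
  "valid_vec b \<longleftrightarrow> (\<forall>i. b i \<ge> -1)"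

text \<open>y^(x^b) = product of sigma^(b_i)(y_i) over i with b_i \<noteq> -1 (x^(-1) = 0 gives factor 1).\<close>
definition ymon :: "('n::finite \<Rightarrow> int) \<Rightarrow> ('n, 'k::field) dpoly" where
  "ymon b = (\<Prod>i\<in>{i. b i \<noteq> -1}. dvar i (nat (b i)))"

definition char_vec :: "('n::finite, 'k::field) dpoly set \<Rightarrow> ('n \<Rightarrow> int) \<Rightarrow> bool" where
  "char_vec I c \<longleftrightarrow> valid_vec c \<and> ymon c \<in> I \<and>
     (\<forall>c'. valid_vec c' \<and> c' \<le> c \<and> ymon c' \<in> I \<longrightarrow> c' = c)"

definition mpow :: "('k::field \<Rightarrow> 'k) \<Rightarrow> ('n \<Rightarrow> int) \<Rightarrow> ('n, 'k) dpoly set" where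
  "mpow s b = sigma_ideal_gen s {dvar i (nat (b i)) | i. b i \<noteq> -1}"

definition vec_bs :: "('n \<Rightarrow> int) \<Rightarrow> ('n \<Rightarrow> int) \<Rightarrow> ('n \<Rightarrow> int)" where
  "vec_bs a b = (\<lambda>i. if b i \<ge> 0 then a i + 1 - b i else -1)"

definition alex_dual :: "('k::field \<Rightarrow> 'k) \<Rightarrow> ('n::finite, 'k) dpoly set \<Rightarrow> ('n \<Rightarrow> int) \<Rightarrow> ('n, 'k) dpoly set" where
  "alex_dual s I a = \<Inter>{mpow s (vec_bs a c) | c. char_vec I c}"

end

theory Submission
  imports Defs
begin

text \<open>Membership of \<open>y\<^sup>x\<^sup>\<^bold>b\<close> in a well-mixed \<open>\<sigma>\<close>-ideal is upward closed in \<open>\<^bold>b\<close>: multiplying by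
  \<open>y\<^sub>i\<close> raises \<open>b\<^sub>i\<close> from \<open>-1\<close> to \<open>0\<close>, and well-mixedness replaces the factor \<open>\<sigma>\<^sup>j(y\<^sub>i)\<close> by
  \<open>\<sigma>\<^sup>j\<^sup>+\<^sup>1(y\<^sub>i)\<close>. Hence \<open>y\<^sup>x\<^sup>\<^bold>b \<in> I\<close> iff some character vector \<open>\<^bold>c\<close> satisfies \<open>\<^bold>c \<le> \<^bold>b\<close>.
  On the other side, \<open>y\<^sup>x\<^sup>\<^bold>e\<close> lies in \<open>\<frak>m\<^sup>\<^bold>f\<close> iff \<open>0 \<le> f\<^sub>i \<le> e\<^sub>i\<close> for some \<open>i\<close>; for \<open>\<^bold>e = \<^bold>a - \<^bold>b\<close> and
  \<open>\<^bold>f = \<^bold>a\<setminus>\<^bold>c\<close> this says \<open>b\<^sub>i < c\<^sub>i\<close> for some \<open>i\<close>, i.e. \<open>\<^bold>c \<not>\<le> \<^bold>b\<close>. Intersecting over all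
  character vectors gives the duality.\<close>

lemma is_ideal_mult_right: "is_ideal I \<Longrightarrow> p \<in> I \<Longrightarrow> p * r \<in> I"
  unfolding is_ideal_def by (metis mult.commute)

lemma dsigma_dvar: "ring_endo s \<Longrightarrow> dsigma s (dvar i j) = dvar i (Suc j)"
  by (simp add: dsigma_def dvar_def shift_mon_def ring_endo_def)

lemma lookup_shift_mon_Suc: "Poly_Mapping.lookup (shift_mon m) (i, Suc j) = Poly_Mapping.lookup m (i, j)"
proof -
  have "Poly_Mapping.lookup (shift_mon m) (i, Suc j) =
     (\<Sum>v\<in>Poly_Mapping.keys m. if v = (i, j) then Poly_Mapping.lookup m v else 0)"
    unfolding shift_mon_def lookup_sum lookup_single by (rule sum.cong) (auto simp: when_def)
  then show ?thesis by (simp add: in_keys_iff)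
qed

lemma keys_dsigma_subset: "Poly_Mapping.keys (dsigma s p) \<subseteq> shift_mon ` Poly_Mapping.keys p"
  unfolding dsigma_def by (rule subset_trans[OF keys_sum]) (auto split: if_splits)

definition ymon_exp :: "('n::finite \<Rightarrow> int) \<Rightarrow> ('n \<times> nat) \<Rightarrow>\<^sub>0 nat" where
  "ymon_exp b = (\<Sum>i\<in>{i. b i \<noteq> -1}. Poly_Mapping.single (i, nat (b i)) 1)"

lemma prod_single_one:
  "finite A \<Longrightarrow> (\<Prod>i\<in>A. Poly_Mapping.single (f i) (1::'k::field)) = Poly_Mapping.single (\<Sum>i\<in>A. f i) 1"
  by (induction A rule: finite_induct) (auto simp: mult_single)

lemma ymon_eq_single: "(ymon b :: ('n::finite, 'k::field) dpoly) = Poly_Mapping.single (ymon_exp b) 1"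
  unfolding ymon_def ymon_exp_def dvar_def by (rule prod_single_one) simp

lemma lookup_ymon_exp:
  "Poly_Mapping.lookup (ymon_exp b) (i, j) = (if b i \<noteq> -1 \<and> j = nat (b i) then 1 else 0)"
proof -
  have "Poly_Mapping.lookup (ymon_exp b) (i, j) =
      (\<Sum>i'\<in>{i. b i \<noteq> -1}. if i' = i \<and> j = nat (b i) then 1 else 0)"
    unfolding ymon_exp_def lookup_sum lookup_single by (rule sum.cong) (auto simp: when_def)
  then show ?thesis by (simp add: sum.delta')
qed

lemma ymon_eq_ymon_upd_times:
  "(ymon c :: ('n::finite, 'k::field) dpoly) =
     ymon (c(i := -1)) * (if c i = -1 then 1 else dvar i (nat (c i)))"
proof -
  have "(ymon (c(i := -1)) :: ('n, 'k) dpoly) = (\<Prod>j\<in>{j. c j \<noteq> -1} - {i}. dvar j (nat (c j)))"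
    unfolding ymon_def by (rule prod.cong) auto
  then show ?thesis
    unfolding ymon_def by (cases "c i = -1") (auto simp: prod.remove[of _ i] mult.commute)
qed

context
  fixes s :: "'k::field \<Rightarrow> 'k" and I :: "('n::finite, 'k) dpoly set"
  assumes endo: "ring_endo s" and sigma_ideal: "is_sigma_ideal s I" and mixed: "well_mixed s I"
begin

lemma ymon_mem_raise_one:
  assumes ge: "c i \<ge> -1" and mem: "ymon c \<in> I"
  shows "ymon (c(i := c i + 1)) \<in> I"
proof -
  have ideal: "is_ideal I" using sigma_ideal by (simp add: is_sigma_ideal_def)
  have raised: "(ymon (c(i := c i + 1)) :: ('n, 'k) dpoly) = ymon (c(i := -1)) * dvar i (nat (c i + 1))"
    using ymon_eq_ymon_upd_times[of "c(i := c i + 1)" i] ge by simp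
  show ?thesis
  proof (cases "c i = -1")
    case True
    have "(ymon c :: ('n, 'k) dpoly) = ymon (c(i := -1))"
      using ymon_eq_ymon_upd_times[of c i, where 'k='k] True by simp
    moreover have "nat (c i + 1) = 0" using True by simp
    ultimately have "(ymon (c(i := c i + 1)) :: ('n, 'k) dpoly) = ymon c * dvar i 0"
      using raised by argo
    then show ?thesis using is_ideal_mult_right[OF ideal mem] by simp
  next
    case False
    then have "ymon (c(i := -1)) * dvar i (nat (c i)) \<in> I"
      using mem ymon_eq_ymon_upd_times[of c i, where 'k='k] by simp
    then have "ymon (c(i := -1)) * dsigma s (dvar i (nat (c i))) \<in> I"
      using mixed unfolding well_mixed_def by blast
    moreover have "Suc (nat (c i)) = nat (c i + 1)" using ge False by simp
    ultimately show ?thesis using raised by (simp add: dsigma_dvar[OF endo])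
  qed
qed

lemma ymon_mem_raise:
  assumes "c i \<ge> -1" and "ymon c \<in> I"
  shows "ymon (c(i := c i + int k)) \<in> I"
proof (induction k)
  case 0
  then show ?case using assms(2) by simp
next
  case (Suc k)
  have eq: "c(i := c i + int (Suc k)) = (c(i := c i + int k))(i := (c(i := c i + int k)) i + 1)"
    by (simp add: algebra_simps)
  show ?case unfolding eq by (rule ymon_mem_raise_one[OF _ Suc]) (use assms(1) in simp)
qed

lemma ymon_mem_mono:
  assumes valid: "valid_vec c" and le: "c \<le> d" and mem: "ymon c \<in> I"
  shows "ymon d \<in> I"
proof -
  have "ymon (\<lambda>j. if j \<in> A then d j else c j) \<in> I" for A :: "'n set"
    using finite[of A]
  proof (induction A rule: finite_induct)
    case empty
    then show ?case using mem by simp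
  next
    case (insert x A)
    let ?v = "\<lambda>j. if j \<in> A then d j else c j"
    have "c x \<le> d x" using le by (simp add: le_fun_def)
    then have eq: "(\<lambda>j. if j \<in> insert x A then d j else c j) = ?v(x := ?v x + int (nat (d x - c x)))"
      using insert.hyps(2) by auto
    have "?v x \<ge> -1" using insert.hyps(2) valid by (simp add: valid_vec_def)
    then show ?case unfolding eq by (rule ymon_mem_raise[OF _ insert.IH])
  qed
  from this[of UNIV] show ?thesis by simp
qed

end

lemma char_vec_below:
  fixes I :: "('n::finite, 'k::field) dpoly set"
  assumes valid: "valid_vec b" and mem: "ymon b \<in> I"
  shows "\<exists>c. char_vec I c \<and> c \<le> b"
proof -
  let ?P = "\<lambda>c. valid_vec c \<and> c \<le> b \<and> ymon c \<in> I"
  let ?size = "\<lambda>c::'n \<Rightarrow> int. nat (\<Sum>i\<in>UNIV. c i + 1)"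
  obtain c where c: "?P c" and least: "\<And>c'. ?P c' \<Longrightarrow> ?size c \<le> ?size c'"
    using ex_has_least_nat[of ?P b ?size] valid mem by auto
  have "c' = c" if c': "valid_vec c'" "c' \<le> c" "ymon c' \<in> I" for c'
  proof (rule ccontr)
    assume "c' \<noteq> c"
    then obtain i where "c' i < c i" using c'(2) by (metis le_funD order_less_le ext)
    then have "(\<Sum>i\<in>UNIV. c' i + 1) < (\<Sum>i\<in>UNIV. c i + 1)"
      using c'(2) by (intro sum_strict_mono_ex1) (auto simp: le_fun_def intro!: exI[of _ i])
    moreover have "0 \<le> (\<Sum>i\<in>UNIV. c' i + 1)"
      using c'(1) by (intro sum_nonneg) (smt (verit) valid_vec_def)
    ultimately have "?size c' < ?size c" by simp
    moreover have "?P c'" using c c' by (auto intro: order_trans)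
    ultimately show False using least by fastforce
  qed
  then have "char_vec I c" using c by (auto simp: char_vec_def)
  then show ?thesis using c by blast
qed

lemma ymon_mem_iff_char_vec_le:
  fixes I :: "('n::finite, 'k::field) dpoly set"
  assumes "ring_endo s" "is_sigma_ideal s I" "well_mixed s I" "valid_vec b"
  shows "ymon b \<in> I \<longleftrightarrow> (\<exists>c. char_vec I c \<and> c \<le> b)"
  using char_vec_below[OF assms(4)] ymon_mem_mono[OF assms(1-3)] by (auto simp: char_vec_def)

definition mpow_terms :: "('n \<Rightarrow> int) \<Rightarrow> ('n, 'k::field) dpoly set" where
  "mpow_terms f = {p. \<forall>m\<in>Poly_Mapping.keys p.
     \<exists>i j. 0 < Poly_Mapping.lookup m (i, j) \<and> f i \<noteq> -1 \<and> nat (f i) \<le> j}"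

lemma is_sigma_ideal_mpow_terms:
  fixes s :: "'k::field \<Rightarrow> 'k"
  shows "is_sigma_ideal s (mpow_terms f :: ('n, 'k) dpoly set)"
  unfolding is_sigma_ideal_def is_ideal_def
proof (intro conjI ballI allI)
  show "0 \<in> mpow_terms f" by (simp add: mpow_terms_def)
next
  fix p q :: "('n, 'k) dpoly"
  assume "p \<in> mpow_terms f" "q \<in> mpow_terms f"
  then show "p + q \<in> mpow_terms f" unfolding mpow_terms_def using keys_add[of p q] by blast
next
  fix r p :: "('n, 'k) dpoly"
  assume p: "p \<in> mpow_terms f"
  show "r * p \<in> mpow_terms f" unfolding mpow_terms_def mem_Collect_eq
  proof
    fix m assume "m \<in> Poly_Mapping.keys (r * p)"
    then obtain m1 m2 where m: "m = m1 + m2" "m2 \<in> Poly_Mapping.keys p" using keys_mult by blast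
    then obtain i j where "0 < Poly_Mapping.lookup m2 (i, j)" "f i \<noteq> -1" "nat (f i) \<le> j"
      using p unfolding mpow_terms_def by blast
    then show "\<exists>i j. 0 < Poly_Mapping.lookup m (i, j) \<and> f i \<noteq> -1 \<and> nat (f i) \<le> j"
      using m by (auto simp: lookup_add)
  qed
next
  fix p :: "('n, 'k) dpoly"
  assume p: "p \<in> mpow_terms f"
  show "dsigma s p \<in> mpow_terms f" unfolding mpow_terms_def mem_Collect_eq
  proof
    fix m assume "m \<in> Poly_Mapping.keys (dsigma s p)"
    then obtain m0 where m: "m = shift_mon m0" "m0 \<in> Poly_Mapping.keys p"
      using keys_dsigma_subset by blast
    then obtain i j where "0 < Poly_Mapping.lookup m0 (i, j)" "f i \<noteq> -1" "nat (f i) \<le> j"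
      using p unfolding mpow_terms_def by blast
    then show "\<exists>i j. 0 < Poly_Mapping.lookup m (i, j) \<and> f i \<noteq> -1 \<and> nat (f i) \<le> j"
      using m lookup_shift_mon_Suc[of m0 i j] by (intro exI[of _ i] exI[of _ "Suc j"]) auto
  qed
qed

lemma mpow_subset_mpow_terms:
  fixes s :: "'k::field \<Rightarrow> 'k" and f :: "'n \<Rightarrow> int"
  shows "mpow s f \<subseteq> mpow_terms f"
proof -
  have "dvar i (nat (f i)) \<in> (mpow_terms f :: ('n, 'k) dpoly set)" if "f i \<noteq> -1" for i
    using that unfolding mpow_terms_def dvar_def by (auto intro!: exI[of _ i] exI[of _ "nat (f i)"])
  then have "{dvar i (nat (f i)) |i. f i \<noteq> -1} \<subseteq> (mpow_terms f :: ('n, 'k) dpoly set)"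
    by blast
  then show ?thesis
    using is_sigma_ideal_mpow_terms unfolding mpow_def sigma_ideal_gen_def by blast
qed

lemma dvar_mem_sigma_ideal_mono:
  assumes endo: "ring_endo s" and sigma_ideal: "is_sigma_ideal s J" and mem: "dvar i d \<in> J"
  shows "dvar i (d + k) \<in> J"
proof (induction k)
  case 0
  then show ?case using mem by simp
next
  case (Suc k)
  then have "dsigma s (dvar i (d + k)) \<in> J" using sigma_ideal by (simp add: is_sigma_ideal_def)
  then show ?case by (simp add: dsigma_dvar[OF endo])
qed

lemma ymon_mem_mpow:
  assumes endo: "ring_endo s" and "0 \<le> f i" "f i \<le> e i"
  shows "(ymon e :: ('n::finite, 'k::field) dpoly) \<in> mpow s f"
  unfolding mpow_def sigma_ideal_gen_def
proof (intro InterI, clarify)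
  fix J :: "('n, 'k) dpoly set"
  assume sigma_ideal: "is_sigma_ideal s J" and gens: "{dvar i (nat (f i)) |i. f i \<noteq> -1} \<subseteq> J"
  have "dvar i (nat (f i)) \<in> J" using gens assms(2) by force
  from dvar_mem_sigma_ideal_mono[OF endo sigma_ideal this, of "nat (e i) - nat (f i)"]
  have "dvar i (nat (e i)) \<in> J" using assms(2,3) by simp
  moreover have "(ymon e :: ('n, 'k) dpoly) = ymon (e(i := -1)) * dvar i (nat (e i))"
    using ymon_eq_ymon_upd_times[of e i] assms(2,3) by simp
  ultimately show "ymon e \<in> J"
    using sigma_ideal by (simp add: is_sigma_ideal_def is_ideal_def)
qed

lemma ymon_mem_mpow_iff:
  assumes "ring_endo s" and valid: "valid_vec e" "valid_vec f"
  shows "(ymon e :: ('n::finite, 'k::field) dpoly) \<in> mpow s f \<longleftrightarrow> (\<exists>i. 0 \<le> f i \<and> f i \<le> e i)"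
proof
  assume "(ymon e :: ('n, 'k) dpoly) \<in> mpow s f"
  then have "(ymon e :: ('n, 'k) dpoly) \<in> mpow_terms f" using mpow_subset_mpow_terms by blast
  then obtain i j where "0 < Poly_Mapping.lookup (ymon_exp e) (i, j)" "f i \<noteq> -1" "nat (f i) \<le> j"
    by (auto simp: ymon_eq_single mpow_terms_def)
  moreover have "e i \<ge> -1" "f i \<ge> -1" using valid by (auto simp: valid_vec_def)
  ultimately have "0 \<le> f i" "f i \<le> e i" by (auto simp: lookup_ymon_exp split: if_splits)
  then show "\<exists>i. 0 \<le> f i \<and> f i \<le> e i" by blast
next
  assume "\<exists>i. 0 \<le> f i \<and> f i \<le> e i"
  then show "(ymon e :: ('n, 'k) dpoly) \<in> mpow s f" using ymon_mem_mpow[OF assms(1)] by blast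
qed

lemma ymon_diff_mem_mpow_vec_bs_iff:
  assumes endo: "ring_endo s" and valid: "valid_vec b" and le: "b \<le> a" "c \<le> a"
  shows "(ymon (\<lambda>i. a i - b i) :: ('n::finite, 'k::field) dpoly) \<in> mpow s (vec_bs a c)
    \<longleftrightarrow> \<not> c \<le> b"
proof -
  have "-1 \<le> a i - b i" for i using le(1) le_funD[of b a i] by linarith
  then have "valid_vec (\<lambda>i. a i - b i)" by (simp add: valid_vec_def)
  moreover have "valid_vec (vec_bs a c)" using le by (auto simp: valid_vec_def vec_bs_def le_fun_def)
  moreover have "(0 \<le> vec_bs a c i \<and> vec_bs a c i \<le> a i - b i) \<longleftrightarrow> b i < c i" for i
    using valid[unfolded valid_vec_def, rule_format, of i] le_funD[OF le(2), of i]
    by (auto simp: vec_bs_def)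
  ultimately show ?thesis
    using ymon_mem_mpow_iff[OF endo] by (auto simp: le_fun_def not_le)
qed

theorem proposition7p2:
  fixes s :: "'k::field_char_0 \<Rightarrow> 'k"
    and I :: "('n::finite, 'k) dpoly set"
    and a b :: "'n \<Rightarrow> int"
  assumes "ring_endo s"
    and "is_sigma_ideal s I" and "is_radical I" and "well_mixed s I" and "monomial_ideal I"
    and "valid_vec a" and "\<forall>c. char_vec I c \<longrightarrow> c \<le> a"
    and "valid_vec b" and "b \<le> a"
  shows "ymon b \<notin> I \<longleftrightarrow> ymon (\<lambda>i. a i - b i) \<in> alex_dual s I a"
proof -
  have "ymon (\<lambda>i. a i - b i) \<in> alex_dual s I a \<longleftrightarrow>
      (\<forall>c. char_vec I c \<longrightarrow> ymon (\<lambda>i. a i - b i) \<in> mpow s (vec_bs a c))"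
    unfolding alex_dual_def by blast
  also have "\<dots> \<longleftrightarrow> (\<forall>c. char_vec I c \<longrightarrow> \<not> c \<le> b)"
    using ymon_diff_mem_mpow_vec_bs_iff[OF assms(1,8,9)] assms(7) by blast
  also have "\<dots> \<longleftrightarrow> ymon b \<notin> I"
    using ymon_mem_iff_char_vec_le[OF assms(1,2,4,8)] by blast
  finally show ?thesis by blast
qed

end
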